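(* Let $G$ be a fixed bipartite graph with $|V(G)|=p\ge 3$ vertices and $|E(G)|=q$ edges. Then there exists a constant $C>0$ (depending on $G$) such that for all sufficiently large $n$, \[ \operatorname{br}(G,K_{n,n}) > C\left(\frac{n}{\log n}\right)^{(q-1)/(p-2)}. \]
   Context: For bipartite graphs $G_1,G_2$, the bipartite Ramsey number $\operatorname{br}(G_1,G_2)$ is the smallest integer $N$ such that every red/blue coloring of the edges of the complete bipartite graph $K_{N,N}$ contains a red copy of $G_1$ or a blue copy of $G_2$. $K_{n,n}$ denotes the complete bipartite graph with both parts of size $n$. Rounding (floors/ceilings) is ignored. *)

theory Defs
  imports Complex_Main
begin

definition simple_graph :: "'a set \<Rightarrow> 'a set set \<Rightarrow> bool" where
  "simple_graph V E \<longleftrightarrow> finite V \<and> (\<forall>e\<in>E. e \<subseteq> V \<and> card e = 2)"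

definition bipartite_graph :: "'a set \<Rightarrow> 'a set set \<Rightarrow> bool" where
  "bipartite_graph V E \<longleftrightarrow> simple_graph V E \<and> (\<exists>X\<subseteq>V. \<forall>e\<in>E. card (e \<inter> X) = 1)"

text \<open>Vertices of K_{N,N}: (side, index) with index < N. A red/blue colouring of K_{N,N} is
  c :: nat \<Rightarrow> nat \<Rightarrow> bool, where c i j is the colour of the edge between left vertex i
  and right vertex j (True = red, False = blue).\<close>
definition KNN_verts :: "nat \<Rightarrow> (bool \<times> nat) set" where
  "KNN_verts N = {x. snd x < N}"

definition edge_colour :: "(nat \<Rightarrow> nat \<Rightarrow> bool) \<Rightarrow> bool \<times> nat \<Rightarrow> bool \<times> nat \<Rightarrow> bool" where
  "edge_colour c x y = (if fst x then c (snd x) (snd y) else c (snd y) (snd x))"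

definition has_mono_copy ::
  "nat \<Rightarrow> (nat \<Rightarrow> nat \<Rightarrow> bool) \<Rightarrow> bool \<Rightarrow> 'a set \<Rightarrow> 'a set set \<Rightarrow> bool" where
  "has_mono_copy N c col V E \<longleftrightarrow>
     (\<exists>f. inj_on f V \<and> f ` V \<subseteq> KNN_verts N \<and>
          (\<forall>u v. {u, v} \<in> E \<longrightarrow> fst (f u) \<noteq> fst (f v) \<and> edge_colour c (f u) (f v) = col))"

definition bip_ramsey :: "'a set \<Rightarrow> 'a set set \<Rightarrow> 'b set \<Rightarrow> 'b set set \<Rightarrow> nat" where
  "bip_ramsey V1 E1 V2 E2 =
     (LEAST N. \<forall>c. has_mono_copy N c True V1 E1 \<or> has_mono_copy N c False V2 E2)"

definition Kbip_V :: "nat \<Rightarrow> (bool \<times> nat) set" where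
  "Kbip_V n = {x. snd x < n}"

definition Kbip_E :: "nat \<Rightarrow> (bool \<times> nat) set set" where
  "Kbip_E n = {{x, y} | x y. snd x < n \<and> snd y < n \<and> fst x \<noteq> fst y}"

end

theory Submission
  imports Defs "HOL-Library.FuncSet" "HOL-Library.Ramsey" "HOL-Real_Asymp.Real_Asymp"
begin

text \<open>
  Colour each edge of K_{N,N} red independently with probability r = b log n / n, and then recolour
  blue the edges of a maximal family of edge-disjoint red copies of G. The result has no red G. If
  it had a blue K_{n,n} on S \<times> T, the copies A of the family meeting S \<times> T would be disjoint and
  red while all other edges of S \<times> T are blue, an event of probability at most
  (1 - r)^(n^2) (r / (1 - r))^(q |A|). Every edge lies in at most p^2 (2N)^(p-2) copies of G, so
  summing over the families A and over the (N choose n)^2 choices of S and T gives a total below 1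
  for N = c (n / log n)^((q-1)/(p-2)). Probabilities appear as the weights r^|R| (1 - r)^|U - R|
  of the red edge sets R, so the argument is a weighted count.
\<close>

section \<open>A weighted deletion lemma\<close>

text \<open>The probability that a random subset of \<open>U\<close>, containing each element independently with
  probability \<open>r\<close>, equals \<open>R\<close>.\<close>

definition subset_weight :: "real \<Rightarrow> 'a set \<Rightarrow> 'a set \<Rightarrow> real" where
  "subset_weight r U R = r ^ card R * (1 - r) ^ card (U - R)"

lemma prod_if_mem_zero:
  fixes c :: "'b::comm_semiring_1"
  assumes "finite A"
  shows "(\<Prod>x\<in>A. if x \<in> Y then 0 else c) = (if A \<inter> Y = {} then c ^ card A else 0)"
proof (cases "A \<inter> Y = {}")
  case True
  then have "(\<Prod>x\<in>A. if x \<in> Y then 0 else c) = (\<Prod>x\<in>A. c)"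
    by (intro prod.cong) auto
  with True show ?thesis by simp
qed (use assms in \<open>auto intro!: prod_zero\<close>)

lemma sum_subset_weight_containing_avoiding:
  assumes U: "finite U" and XU: "X \<subseteq> U" and YU: "Y \<subseteq> U" and XY: "X \<inter> Y = {}"
  shows "(\<Sum>R\<in>{R\<in>Pow U. X \<subseteq> R \<and> R \<inter> Y = {}}. subset_weight r U R) = r ^ card X * (1 - r) ^ card Y"
proof -
  define f where "f x = (if x \<in> Y then 0 else r)" for x
  define g where "g x = (if x \<in> X then 0 else 1 - r)" for x
  have expand: "(\<Prod>x\<in>R. f x) * (\<Prod>x\<in>U - R. g x) = (if X \<subseteq> R \<and> R \<inter> Y = {} then subset_weight r U R else 0)"
    if "R \<subseteq> U" for R
  proof -
    have "finite R" "finite (U - R)" using that U finite_subset by auto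
    moreover have "X \<subseteq> R \<longleftrightarrow> (U - R) \<inter> X = {}" using XU by auto
    ultimately show ?thesis
      by (auto simp: f_def g_def subset_weight_def prod_if_mem_zero)
  qed
  have "(\<Sum>R\<in>{R\<in>Pow U. X \<subseteq> R \<and> R \<inter> Y = {}}. subset_weight r U R)
      = (\<Sum>R\<in>Pow U. if X \<subseteq> R \<and> R \<inter> Y = {} then subset_weight r U R else 0)"
    using U by (intro sum.inter_filter) simp
  also have "\<dots> = (\<Prod>x\<in>U. f x + g x)"
    by (simp add: prod_add[OF U] expand)
  also have "\<dots> = (\<Prod>x\<in>U. (if x \<in> X then r else 1) * (if x \<in> Y then 1 - r else 1))"
    using XY by (intro prod.cong) (auto simp: f_def g_def)
  also have "\<dots> = r ^ card X * (1 - r) ^ card Y"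
    using XU YU U by (simp add: prod.distrib prod.If_cases Int_absorb1)
  finally show ?thesis .
qed

lemma sum_subset_weight: "finite U \<Longrightarrow> (\<Sum>R\<in>Pow U. subset_weight r U R) = 1"
  using sum_subset_weight_containing_avoiding[of U "{}" "{}" r] by (simp add: Pow_def)

lemma sum_Pow_power_card:
  fixes t :: "'b::comm_semiring_1"
  assumes "finite F"
  shows "(\<Sum>A\<in>Pow F. t ^ card A) = (1 + t) ^ card F"
  using prod_add[OF assms, of "\<lambda>_. t" "\<lambda>_. 1"] by (simp add: add.commute)

lemma power_times_one_minus_power_le:
  fixes r :: real and k l q m :: nat
  assumes "0 \<le> r" "r \<le> 1/2" "q * m \<le> k" "b \<le> k + l"
  shows "r ^ k * (1 - r) ^ l \<le> (1 - r) ^ b * ((r / (1 - r)) ^ q) ^ m"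
proof -
  define s where "s = r / (1 - r)"
  have s: "0 \<le> s" "s \<le> 1" and r: "r = s * (1 - r)"
    using assms(1,2) by (auto simp: s_def field_simps)
  have "r ^ k * (1 - r) ^ l = s ^ k * (1 - r) ^ (k + l)"
    by (subst r) (simp add: power_mult_distrib power_add)
  also have "\<dots> \<le> s ^ (q * m) * (1 - r) ^ b"
    using assms s by (intro mult_mono power_decreasing) auto
  also have "\<dots> = (1 - r) ^ b * (s ^ q) ^ m"
    by (simp add: power_mult)
  finally show ?thesis
    by (simp add: s_def)
qed

definition disjoint_witness :: "'a set \<Rightarrow> 'a set set \<Rightarrow> 'a set \<Rightarrow> bool" where
  "disjoint_witness B A R \<longleftrightarrow> pairwise disjnt A \<and> \<Union>A \<subseteq> R \<and> R \<inter> (B - \<Union>A) = {}"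

lemma exists_disjoint_witness:
  assumes Ds: "finite Ds" "{} \<notin> Ds"
    and fails: "\<And>R'. R' \<subseteq> R \<Longrightarrow> (\<exists>D\<in>Ds. D \<subseteq> R') \<or> (\<exists>B\<in>Bs. B \<inter> R' = {})"
  obtains B A where "B \<in> Bs" "A \<subseteq> {D\<in>Ds. D \<inter> B \<noteq> {}}" "disjoint_witness B A R"
proof -
  define Fam where "Fam = {F. F \<subseteq> {D\<in>Ds. D \<subseteq> R} \<and> pairwise disjnt F}"
  have "finite Fam" "{} \<in> Fam"
    using Ds by (auto simp: Fam_def)
  then obtain F where F: "F \<in> Fam" and F_max: "\<And>G. G \<in> Fam \<Longrightarrow> F \<subseteq> G \<Longrightarrow> F = G"
    using finite_has_maximal[of Fam] by blast
  have F_sub: "F \<subseteq> {D\<in>Ds. D \<subseteq> R}" and F_disj: "pairwise disjnt F"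
    using F by (auto simp: Fam_def)
  have "\<not> D \<subseteq> R - \<Union>F" if "D \<in> Ds" for D
  proof
    assume D: "D \<subseteq> R - \<Union>F"
    moreover have "D \<noteq> {}"
      using Ds that by auto
    ultimately have "D \<notin> F"
      by blast
    moreover have "insert D F \<in> Fam"
      using F_sub F_disj D that by (auto simp: Fam_def pairwise_insert disjnt_def)
    ultimately show False
      using F_max by blast
  qed
  then obtain B where B: "B \<in> Bs" "B \<inter> (R - \<Union>F) = {}"
    using fails[of "R - \<Union>F"] by blast
  define A where "A = {D\<in>F. D \<inter> B \<noteq> {}}"
  have "pairwise disjnt A"
    using F_disj by (rule pairwise_subset) (auto simp: A_def)
  moreover have "R \<inter> (B - \<Union>A) = {}"
    using B by (auto simp: A_def)
  ultimately have "disjoint_witness B A R"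
    using F_sub by (auto simp: disjoint_witness_def A_def)
  moreover have "A \<subseteq> {D\<in>Ds. D \<inter> B \<noteq> {}}"
    using F_sub by (auto simp: A_def)
  ultimately show ?thesis
    using B that by blast
qed

lemma sum_subset_weight_witness_le:
  assumes U: "finite U" "B \<subseteq> U" and A: "\<forall>D\<in>A. D \<subseteq> U \<and> q \<le> card D"
    and r: "0 \<le> r" "r \<le> 1/2"
  shows "(\<Sum>R\<in>Pow U. if disjoint_witness B A R then subset_weight r U R else 0)
    \<le> (1 - r) ^ card B * ((r / (1 - r)) ^ q) ^ card A"
proof (cases "pairwise disjnt A")
  case True
  have fin: "finite A" "\<forall>D\<in>A. finite D"
    using A U by (auto intro: finite_subset[of A "Pow U"] finite_subset)
  have "q * card A \<le> (\<Sum>D\<in>A. card D)"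
    using A sum_bounded_below[of A q card] by (simp add: mult.commute)
  also have "\<dots> = card (\<Union>A)"
    using fin True by (simp add: card_Union_disjoint)
  finally have card_A: "q * card A \<le> card (\<Union>A)" .
  have "card B \<le> card (\<Union>A \<union> (B - \<Union>A))"
    using A U by (intro card_mono) (auto intro: finite_subset[of _ U])
  then have card_B: "card B \<le> card (\<Union>A) + card (B - \<Union>A)"
    using card_Un_le order_trans by blast
  have "(\<Sum>R\<in>Pow U. if disjoint_witness B A R then subset_weight r U R else 0)
      = (\<Sum>R\<in>Pow U. if \<Union>A \<subseteq> R \<and> R \<inter> (B - \<Union>A) = {} then subset_weight r U R else 0)"
    using True by (simp add: disjoint_witness_def)
  also have "\<dots> = (\<Sum>R\<in>{R\<in>Pow U. \<Union>A \<subseteq> R \<and> R \<inter> (B - \<Union>A) = {}}. subset_weight r U R)"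
    using U by (intro sum.inter_filter[symmetric]) simp
  also have "\<dots> = r ^ card (\<Union>A) * (1 - r) ^ card (B - \<Union>A)"
    using A U by (intro sum_subset_weight_containing_avoiding) auto
  also have "\<dots> \<le> (1 - r) ^ card B * ((r / (1 - r)) ^ q) ^ card A"
    using r card_A card_B by (rule power_times_one_minus_power_le)
  finally show ?thesis .
qed (use r in \<open>simp add: disjoint_witness_def\<close>)

lemma exists_subset_avoiding_and_hitting:
  fixes r :: real
  assumes U: "finite U" "Ds \<subseteq> Pow U" "Bs \<subseteq> Pow U"
    and Ds: "1 \<le> q" "\<forall>D\<in>Ds. q \<le> card D"
    and r: "0 \<le> r" "r \<le> 1/2"
    and small: "(\<Sum>B\<in>Bs. (1 - r) ^ card B * (1 + (r / (1 - r)) ^ q) ^ card {D\<in>Ds. D \<inter> B \<noteq> {}}) < 1"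
  shows "\<exists>R\<subseteq>U. (\<forall>D\<in>Ds. \<not> D \<subseteq> R) \<and> (\<forall>B\<in>Bs. B \<inter> R \<noteq> {})"
proof (rule ccontr)
  assume "\<not> ?thesis"
  then have fails: "\<And>R. R \<subseteq> U \<Longrightarrow> (\<exists>D\<in>Ds. D \<subseteq> R) \<or> (\<exists>B\<in>Bs. B \<inter> R = {})"
    by auto
  define t where "t = (r / (1 - r)) ^ q"
  define w where "w = subset_weight r U"
  define meets where "meets B = {D\<in>Ds. D \<inter> B \<noteq> {}}" for B
  define witnessed where "witnessed B A R = (if disjoint_witness B A R then w R else 0)" for B A R
  have fin: "finite Ds" "finite Bs" "finite (meets B)" for B
    using U by (auto simp: meets_def intro: finite_subset[of _ "Pow U"])
  have witnessed_nonneg: "0 \<le> witnessed B A R" for B A R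
    using r by (simp add: witnessed_def w_def subset_weight_def)
  have "{} \<notin> Ds"
    using Ds by force
  have covered: "w R \<le> (\<Sum>B\<in>Bs. \<Sum>A\<in>Pow (meets B). witnessed B A R)" if R: "R \<subseteq> U" for R
  proof -
    obtain B A where B: "B \<in> Bs" and A: "A \<in> Pow (meets B)" and "disjoint_witness B A R"
      by (rule exists_disjoint_witness[OF fin(1) \<open>{} \<notin> Ds\<close>, where R = R and Bs = Bs])
        (use fails R in \<open>auto simp: meets_def\<close>)
    then have "w R \<le> (\<Sum>A\<in>Pow (meets B). witnessed B A R)"
      using fin witnessed_nonneg by (intro member_le_sum[of A, THEN order_trans[rotated]])
        (auto simp: witnessed_def)
    also have "\<dots> \<le> (\<Sum>B\<in>Bs. \<Sum>A\<in>Pow (meets B). witnessed B A R)"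
      using B fin witnessed_nonneg by (intro member_le_sum sum_nonneg)
    finally show ?thesis .
  qed
  \<comment> \<open>Every \<open>R\<close> has a witness, so the total weight 1 is at most the total weight of the witnesses.\<close>
  have "1 = (\<Sum>R\<in>Pow U. w R)"
    using U by (simp add: w_def sum_subset_weight)
  also have "\<dots> \<le> (\<Sum>R\<in>Pow U. \<Sum>B\<in>Bs. \<Sum>A\<in>Pow (meets B). witnessed B A R)"
    by (intro sum_mono covered) simp
  also have "\<dots> = (\<Sum>B\<in>Bs. \<Sum>A\<in>Pow (meets B). \<Sum>R\<in>Pow U. witnessed B A R)"
    by (subst sum.swap) (simp add: sum.swap[of _ "Pow U"])
  also have "\<dots> \<le> (\<Sum>B\<in>Bs. \<Sum>A\<in>Pow (meets B). (1 - r) ^ card B * t ^ card A)"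
    unfolding witnessed_def w_def t_def using U Ds r
    by (intro sum_mono sum_subset_weight_witness_le) (auto simp: meets_def)
  also have "\<dots> = (\<Sum>B\<in>Bs. (1 - r) ^ card B * (1 + t) ^ card (meets B))"
    by (simp add: sum_distrib_left[symmetric] sum_Pow_power_card fin)
  also have "\<dots> < 1"
    using small by (simp add: t_def meets_def)
  finally show False
    by simp
qed

section \<open>Copies of a graph in K_{N,N}\<close>

text \<open>An edge of K_{N,N} is identified with the pair (left index, right index) of its ends, the
  argument pair of a colouring; copies of a graph are represented by their sets of such pairs.\<close>

definition knn_edge :: "bool \<times> nat \<Rightarrow> bool \<times> nat \<Rightarrow> nat \<times> nat" where
  "knn_edge x y = (if fst x then (snd x, snd y) else (snd y, snd x))"

definition knn_embedding :: "nat \<Rightarrow> 'a set \<Rightarrow> 'a set set \<Rightarrow> ('a \<Rightarrow> bool \<times> nat) \<Rightarrow> bool" where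
  "knn_embedding N V E f \<longleftrightarrow>
     inj_on f V \<and> f ` V \<subseteq> KNN_verts N \<and> (\<forall>u v. {u, v} \<in> E \<longrightarrow> fst (f u) \<noteq> fst (f v))"

definition copy_edges :: "'a set set \<Rightarrow> ('a \<Rightarrow> bool \<times> nat) \<Rightarrow> (nat \<times> nat) set" where
  "copy_edges E f = {knn_edge (f u) (f v) | u v. {u, v} \<in> E}"

definition knn_copies :: "nat \<Rightarrow> 'a set \<Rightarrow> 'a set set \<Rightarrow> (nat \<times> nat) set set" where
  "knn_copies N V E = copy_edges E ` {f. knn_embedding N V E f}"

lemma KNN_verts_eq: "KNN_verts N = UNIV \<times> {..<N}"
  by (auto simp: KNN_verts_def)

lemma edge_colour_knn_edge: "edge_colour c x y = (case knn_edge x y of (i, j) \<Rightarrow> c i j)"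
  by (simp add: edge_colour_def knn_edge_def)

lemma knn_edge_endpoints:
  "fst x \<noteq> fst y \<Longrightarrow> {x, y} = {(True, fst (knn_edge x y)), (False, snd (knn_edge x y))}"
  by (cases x; cases y) (auto simp: knn_edge_def)

lemma has_mono_copy_imp_knn_copy:
  assumes "has_mono_copy N c col V E"
  shows "\<exists>D\<in>knn_copies N V E. \<forall>(i, j)\<in>D. c i j = col"
proof -
  obtain f where "inj_on f V" "f ` V \<subseteq> KNN_verts N"
    and f: "\<And>u v. {u, v} \<in> E \<Longrightarrow> fst (f u) \<noteq> fst (f v) \<and> edge_colour c (f u) (f v) = col"
    using assms by (auto simp: has_mono_copy_def)
  then have "copy_edges E f \<in> knn_copies N V E"
    by (auto simp: knn_copies_def knn_embedding_def)
  moreover have "c i j = col" if ij: "(i, j) \<in> copy_edges E f" for i j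
  proof -
    obtain u v where "(i, j) = knn_edge (f u) (f v)" "{u, v} \<in> E"
      using ij by (auto simp: copy_edges_def)
    then show ?thesis
      using f[of u v] by (metis case_prod_conv edge_colour_knn_edge)
  qed
  ultimately show ?thesis
    by blast
qed

lemma knn_copy_subset:
  assumes "\<forall>e\<in>E. e \<subseteq> V" "D \<in> knn_copies N V E"
  shows "D \<subseteq> {..<N} \<times> {..<N}"
  using assms by (fastforce simp: knn_copies_def knn_embedding_def copy_edges_def knn_edge_def KNN_verts_def)

lemma copy_edges_cong:
  assumes "\<forall>e\<in>E. e \<subseteq> V" "\<forall>y\<in>V. f y = g y"
  shows "copy_edges E f = copy_edges E g"
  using assms unfolding copy_edges_def by (metis insert_subset)

lemma card_knn_copy:
  assumes "simple_graph V E" "D \<in> knn_copies N V E"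
  shows "card E \<le> card D"
proof -
  have E: "\<forall>e\<in>E. e \<subseteq> V \<and> card e = 2"
    using assms(1) by (simp add: simple_graph_def)
  obtain f where f: "knn_embedding N V E f" and D: "D = copy_edges E f"
    using assms(2) by (auto simp: knn_copies_def)
  have "finite D"
    using knn_copy_subset[OF _ assms(2)] E finite_subset by blast
  define h where "h ij = inv_into V f ` {(True, fst ij), (False, snd ij)}" for ij
  have "E \<subseteq> h ` D"
  proof
    fix e assume "e \<in> E"
    then obtain u v where e: "e = {u, v}" "u \<in> V" "v \<in> V"
      using E by (metis card_2_iff insert_subset)
    have "fst (f u) \<noteq> fst (f v)"
      using f \<open>e \<in> E\<close> e by (simp add: knn_embedding_def)
    from knn_edge_endpoints[OF this]
    have "h (knn_edge (f u) (f v)) = inv_into V f ` f ` e"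
      by (simp add: h_def e(1))
    also have "\<dots> = e"
      using f e by (simp add: knn_embedding_def)
    finally show "e \<in> h ` D"
      using \<open>e \<in> E\<close> e by (force simp: D copy_edges_def)
  qed
  then show ?thesis
    using \<open>finite D\<close> by (meson card_image_le card_mono finite_imageI order_trans)
qed

lemma card_PiE_agreeing_le:
  assumes "finite V" "finite A"
  shows "card {g\<in>V \<rightarrow>\<^sub>E A. \<forall>y\<in>W. g y = h y} \<le> card A ^ card (V - W)"
proof -
  let ?G = "{g\<in>V \<rightarrow>\<^sub>E A. \<forall>y\<in>W. g y = h y}"
  have "inj_on (\<lambda>g. restrict g (V - W)) ?G"
  proof (rule inj_onI)
    fix g g' assume "g \<in> ?G" "g' \<in> ?G" "restrict g (V - W) = restrict g' (V - W)"
    then show "g = g'"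
      by (intro PiE_ext[of g V "\<lambda>_. A"]) (auto dest: fun_cong[where x = "_"] simp: restrict_def, metis)
  qed
  moreover have "(\<lambda>g. restrict g (V - W)) ` ?G \<subseteq> (V - W) \<rightarrow>\<^sub>E A"
    by auto
  ultimately have "card ?G \<le> card ((V - W) \<rightarrow>\<^sub>E A)"
    using assms by (intro card_inj_on_le) (auto intro: finite_PiE)
  also have "\<dots> = card A ^ card (V - W)"
    using assms by (simp add: card_PiE)
  finally show ?thesis .
qed

lemma knn_copies_containing_subset:
  assumes E: "\<forall>e\<in>E. e \<subseteq> V"
  shows "{D\<in>knn_copies N V E. (i, j) \<in> D}
    \<subseteq> copy_edges E ` (\<Union>(u, v)\<in>{(u, v)\<in>V \<times> V. u \<noteq> v}. {g\<in>V \<rightarrow>\<^sub>E KNN_verts N. g u = (True, i) \<and> g v = (False, j)})"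
proof
  fix D assume "D \<in> {D\<in>knn_copies N V E. (i, j) \<in> D}"
  then obtain f u v where f: "knn_embedding N V E f" and D: "D = copy_edges E f"
    and uv: "{u, v} \<in> E" "(i, j) = knn_edge (f u) (f v)"
    by (auto simp: knn_copies_def copy_edges_def)
  have sides: "fst (f u) \<noteq> fst (f v)"
    using f uv by (simp add: knn_embedding_def)
  then have "{f u, f v} = {(True, i), (False, j)}"
    using knn_edge_endpoints[OF sides] uv(2)[symmetric] by simp
  then obtain u' v' where u'v': "{u', v'} \<subseteq> {u, v}" "f u' = (True, i)" "f v' = (False, j)"
    by (auto simp: doubleton_eq_iff)
  then have "(u', v') \<in> {(u, v)\<in>V \<times> V. u \<noteq> v}"
    using E uv by auto
  moreover have "restrict f V \<in> {g\<in>V \<rightarrow>\<^sub>E KNN_verts N. g u' = (True, i) \<and> g v' = (False, j)}"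
    using f u'v' E uv by (auto simp: knn_embedding_def)
  moreover have "copy_edges E (restrict f V) = D"
    using copy_edges_cong[OF E] D by simp
  ultimately show "D \<in> copy_edges E ` (\<Union>(u, v)\<in>{(u, v)\<in>V \<times> V. u \<noteq> v}.
      {g\<in>V \<rightarrow>\<^sub>E KNN_verts N. g u = (True, i) \<and> g v = (False, j)})"
    by blast
qed

lemma card_knn_copies_containing_le:
  assumes V: "finite V" and E: "\<forall>e\<in>E. e \<subseteq> V"
  shows "card {D\<in>knn_copies N V E. (i, j) \<in> D} \<le> card V ^ 2 * (2 * N) ^ (card V - 2)"
proof -
  define P where "P = {(u, v)\<in>V \<times> V. u \<noteq> v}"
  define G where "G = (\<lambda>(u, v). {g\<in>V \<rightarrow>\<^sub>E KNN_verts N. g u = (True, i) \<and> g v = (False, j)})"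
  have "finite (V \<rightarrow>\<^sub>E KNN_verts N)"
    using V by (simp add: KNN_verts_eq finite_PiE)
  then have fin: "finite P" "finite (\<Union>uv\<in>P. G uv)"
    using V by (auto simp: P_def G_def intro: finite_subset)
  have "card {D\<in>knn_copies N V E. (i, j) \<in> D} \<le> card (copy_edges E ` (\<Union>uv\<in>P. G uv))"
    using knn_copies_containing_subset[OF E] fin unfolding P_def G_def by (intro card_mono) auto
  also have "\<dots> \<le> (\<Sum>uv\<in>P. card (G uv))"
    using card_image_le[OF fin(2)] card_UN_le[OF fin(1)] by (rule order_trans)
  also have "\<dots> \<le> (\<Sum>uv\<in>P. (2 * N) ^ (card V - 2))"
  proof (rule sum_mono)
    fix uv assume "uv \<in> P"
    then obtain u v where uv: "uv = (u, v)" "u \<in> V" "v \<in> V" "u \<noteq> v"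
      by (auto simp: P_def)
    then have "G uv = {g\<in>V \<rightarrow>\<^sub>E KNN_verts N. \<forall>y\<in>{u, v}. g y = (if y = u then (True, i) else (False, j))}"
      by (auto simp: G_def)
    also have "card \<dots> \<le> card (KNN_verts N) ^ card (V - {u, v})"
      using V by (rule card_PiE_agreeing_le) (simp add: KNN_verts_eq)
    finally show "card (G uv) \<le> (2 * N) ^ (card V - 2)"
      using V uv by (simp add: KNN_verts_eq card_cartesian_product card_Diff_subset numeral_2_eq_2)
  qed
  also have "\<dots> \<le> card V ^ 2 * (2 * N) ^ (card V - 2)"
  proof -
    have "card P \<le> card (V \<times> V)"
      using V by (intro card_mono) (auto simp: P_def)
    then show ?thesis
      by (simp add: card_cartesian_product power2_eq_square)
  qed
  finally show ?thesis .
qed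

lemma Kbip_E_memI: "k < n \<Longrightarrow> l < n \<Longrightarrow> {(b, k), (\<not> b, l)} \<in> Kbip_E n"
  unfolding Kbip_E_def by (intro CollectI exI[of _ "(b, k)"] exI[of _ "(\<not> b, l)"]) simp

lemma Kbip_embedding_sides:
  assumes f: "\<And>x y. {x, y} \<in> Kbip_E n \<Longrightarrow> fst (f x) \<noteq> fst (f y)"
  obtains s where "\<And>k. k < n \<Longrightarrow> fst (f (s, k))" "\<And>l. l < n \<Longrightarrow> \<not> fst (f (\<not> s, l))"
proof (cases "n = 0")
  case False
  have opposite: "fst (f (b, k)) \<noteq> fst (f (\<not> b, l))" if "k < n" "l < n" for b k l
    using f[OF Kbip_E_memI[OF that]] by simp
  define s where "s = fst (f (True, 0))"
  have "fst (f (s, 0))"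
    using opposite[of 0 0 True] False by (cases s) (auto simp: s_def)
  show ?thesis
  proof (rule that)
    show "fst (f (s, k))" if "k < n" for k
      using opposite[of k 0 s] opposite[of 0 0 s] \<open>fst (f (s, 0))\<close> that False by auto
    show "\<not> fst (f (\<not> s, l))" if "l < n" for l
      using opposite[of 0 l s] \<open>fst (f (s, 0))\<close> that False by auto
  qed
qed (use that in simp)

lemma Kbip_copy_imp_biclique:
  assumes "has_mono_copy N c col (Kbip_V n) (Kbip_E n)"
  shows "\<exists>S T. S \<subseteq> {..<N} \<and> T \<subseteq> {..<N} \<and> card S = n \<and> card T = n \<and> (\<forall>i\<in>S. \<forall>j\<in>T. c i j = col)"
proof -
  obtain f where inj: "inj_on f (Kbip_V n)" and range: "f ` Kbip_V n \<subseteq> KNN_verts N"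
    and f: "\<And>x y. {x, y} \<in> Kbip_E n \<Longrightarrow> fst (f x) \<noteq> fst (f y) \<and> edge_colour c (f x) (f y) = col"
    using assms unfolding has_mono_copy_def by blast
  obtain s where s: "\<And>k. k < n \<Longrightarrow> fst (f (s, k))" "\<And>l. l < n \<Longrightarrow> \<not> fst (f (\<not> s, l))"
    using Kbip_embedding_sides[of n f] f by blast
  define g where "g b k = snd (f (b, k))" for b k
  have g_inj: "inj_on (g b) {..<n}" if side: "\<And>k. k < n \<Longrightarrow> fst (f (b, k)) = \<beta>" for b \<beta>
  proof (rule inj_onI)
    fix k k' assume k: "k \<in> {..<n}" "k' \<in> {..<n}" and "g b k = g b k'"
    then have "f (b, k) = f (b, k')"
      using side by (simp add: g_def prod_eq_iff)
    moreover have "(b, k) \<in> Kbip_V n" "(b, k') \<in> Kbip_V n"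
      using k by (simp_all add: Kbip_V_def)
    ultimately show "k = k'"
      using inj by (metis inj_onD prod.inject)
  qed
  have g_range: "g b k < N" if "k < n" for b k
    using range that by (force simp: g_def Kbip_V_def KNN_verts_def)
  have g_colour: "c (g s k) (g (\<not> s) l) = col" if "k < n" "l < n" for k l
    using f[OF Kbip_E_memI[OF that, of s]] s(1)[OF that(1)] by (simp add: g_def edge_colour_def)
  show ?thesis
  proof (intro exI conjI)
    show "g s ` {..<n} \<subseteq> {..<N}" "g (\<not> s) ` {..<n} \<subseteq> {..<N}"
      using g_range by auto
    show "card (g s ` {..<n}) = n" "card (g (\<not> s) ` {..<n}) = n"
      using g_inj[of s True] g_inj[of "\<not> s" False] s by (simp_all add: card_image)
    show "\<forall>i\<in>g s ` {..<n}. \<forall>j\<in>g (\<not> s) ` {..<n}. c i j = col"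
      using g_colour by auto
  qed
qed

section \<open>Bipartite Ramsey numbers\<close>

lemma obtain_lower_upper_halves:
  fixes H :: "'a::linorder set"
  assumes "finite H" "card H = 2 * m"
  obtains S T where "S \<subseteq> H" "T \<subseteq> H" "card S = m" "card T = m" "\<forall>s\<in>S. \<forall>t\<in>T. s < t"
proof -
  define xs where "xs = sorted_list_of_set H"
  have xs: "sorted_wrt (<) xs" "distinct xs" "set xs = H" "length xs = 2 * m"
    using assms by (simp_all add: xs_def)
  show ?thesis
  proof (rule that[of "set (take m xs)" "set (drop m xs)"])
    show "set (take m xs) \<subseteq> H" "set (drop m xs) \<subseteq> H"
      using xs(3) by (auto dest: in_set_takeD in_set_dropD)
    show "card (set (take m xs)) = m" "card (set (drop m xs)) = m"
      using xs(2,4) by (simp_all add: distinct_card)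
    show "\<forall>s\<in>set (take m xs). \<forall>t\<in>set (drop m xs). s < t"
      using xs(1) sorted_wrt_append[of "(<)" "take m xs" "drop m xs"] by simp
  qed
qed

text \<open>Colour the pair \<open>i < j\<close> by \<open>c i j\<close>; the lower and upper halves of a monochromatic clique of
  size \<open>2 * m\<close> span a monochromatic K_{m,m}.\<close>

lemma biclique_ramsey:
  "\<exists>N. \<forall>c::nat \<Rightarrow> nat \<Rightarrow> bool. \<exists>S T col. S \<subseteq> {..<N} \<and> T \<subseteq> {..<N} \<and> card S = m \<and> card T = m \<and>
      (\<forall>i\<in>S. \<forall>j\<in>T. c i j = col)"
proof -
  obtain N :: nat where N: "partn_lst {..<N} [2 * m, 2 * m] 2"
    using ramsey_full[of "[2 * m, 2 * m]" 2] ..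
  have "\<exists>S T col. S \<subseteq> {..<N} \<and> T \<subseteq> {..<N} \<and> card S = m \<and> card T = m \<and> (\<forall>i\<in>S. \<forall>j\<in>T. c i j = col)"
    for c :: "nat \<Rightarrow> nat \<Rightarrow> bool"
  proof -
    define F where "F e = (if c (Min e) (Max e) then 0 else 1 :: nat)" for e
    have "F \<in> nsets {..<N} 2 \<rightarrow> {..<2}"
      by (simp add: F_def)
    then obtain i H where i: "i < length [2 * m, 2 * m]" and H: "H \<in> nsets {..<N} ([2 * m, 2 * m] ! i)"
      and FH: "F ` nsets H 2 \<subseteq> {i}"
      by (rule partn_lstE[OF N]) simp
    have "[2 * m, 2 * m] ! i = 2 * m"
      using i by (cases i) auto
    then have H_fin: "finite H" "card H = 2 * m" and H_sub: "H \<subseteq> {..<N}"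
      using H by (auto simp: nsets_def)
    obtain S T where ST: "S \<subseteq> H" "T \<subseteq> H" "card S = m" "card T = m" "\<forall>s\<in>S. \<forall>t\<in>T. s < t"
      using H_fin by (rule obtain_lower_upper_halves)
    have "c s t = (i = 0)" if "s \<in> S" "t \<in> T" for s t
    proof -
      have "s < t" "{s, t} \<in> nsets H 2"
        using ST that by (auto simp: nsets_def card_insert_if)
      have "F {s, t} = i"
        using FH imageI[OF \<open>{s, t} \<in> nsets H 2\<close>] by (rule singletonD[OF subsetD])
      moreover have "Min {s, t} = s" "Max {s, t} = t"
        using \<open>s < t\<close> by auto
      ultimately show ?thesis
        by (auto simp: F_def split: if_splits)
    qed
    then show ?thesis
      using ST H_sub by (intro exI[of _ S] exI[of _ T] exI[of _ "i = 0"]) auto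
  qed
  then show ?thesis
    by auto
qed

lemma has_mono_copy_of_biclique:
  assumes bip: "bipartite_graph V E" and ST: "S \<subseteq> {..<N}" "T \<subseteq> {..<N}" "card V \<le> card S" "card V \<le> card T"
    and col: "\<forall>i\<in>S. \<forall>j\<in>T. c i j = col"
  shows "has_mono_copy N c col V E"
proof -
  obtain X where X: "\<forall>e\<in>E. card (e \<inter> X) = 1"
    using bip by (auto simp: bipartite_graph_def)
  have V: "finite V" and E: "\<forall>e\<in>E. e \<subseteq> V \<and> card e = 2"
    using bip by (auto simp: bipartite_graph_def simple_graph_def)
  obtain h1 where h1: "inj_on h1 V" "h1 ` V \<subseteq> S"
    using card_le_inj[OF V finite_subset[OF ST(1)]] ST(3) by auto
  obtain h2 where h2: "inj_on h2 V" "h2 ` V \<subseteq> T"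
    using card_le_inj[OF V finite_subset[OF ST(2)]] ST(4) by auto
  define f where "f u = (if u \<in> X then (True, h1 u) else (False, h2 u))" for u
  have "inj_on f V"
    using h1 h2 by (auto simp: f_def inj_on_def)
  moreover have "f ` V \<subseteq> KNN_verts N"
    using h1(2) h2(2) ST(1,2) by (auto simp: f_def KNN_verts_def image_subset_iff subset_iff)
  moreover have "fst (f u) \<noteq> fst (f v) \<and> edge_colour c (f u) (f v) = col" if e: "{u, v} \<in> E" for u v
  proof -
    have "u \<noteq> v" "u \<in> V" "v \<in> V"
      using E e by fastforce+
    moreover have "card ({u, v} \<inter> X) = 1"
      using X e by blast
    ultimately have "(u \<in> X) \<noteq> (v \<in> X)"
      by (cases "u \<in> X"; cases "v \<in> X") (auto simp: card_insert_if)
    then show ?thesis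
      using col h1 h2 \<open>u \<in> V\<close> \<open>v \<in> V\<close> by (auto simp: f_def edge_colour_def image_subset_iff)
  qed
  ultimately show ?thesis
    unfolding has_mono_copy_def by blast
qed

lemma bipartite_Kbip: "bipartite_graph (Kbip_V n) (Kbip_E n)"
proof -
  have "card e = 2 \<and> e \<subseteq> Kbip_V n \<and> card (e \<inter> {x\<in>Kbip_V n. fst x}) = 1" if "e \<in> Kbip_E n" for e
    using that by (auto simp: Kbip_E_def Kbip_V_def card_insert_if Int_insert_left)
  moreover have "finite (Kbip_V n)"
    by (simp add: Kbip_V_def KNN_verts_eq[unfolded KNN_verts_def])
  ultimately show ?thesis
    unfolding bipartite_graph_def simple_graph_def by (intro conjI exI[of _ "{x\<in>Kbip_V n. fst x}"]) auto
qed

lemma bip_ramsey_exists: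
  assumes "bipartite_graph V1 E1" "bipartite_graph V2 E2"
  shows "\<exists>N. \<forall>c. has_mono_copy N c True V1 E1 \<or> has_mono_copy N c False V2 E2"
proof -
  obtain N where N: "\<forall>c::nat \<Rightarrow> nat \<Rightarrow> bool. \<exists>S T col. S \<subseteq> {..<N} \<and> T \<subseteq> {..<N} \<and>
      card S = max (card V1) (card V2) \<and> card T = max (card V1) (card V2) \<and> (\<forall>i\<in>S. \<forall>j\<in>T. c i j = col)"
    using biclique_ramsey ..
  have "has_mono_copy N c True V1 E1 \<or> has_mono_copy N c False V2 E2" for c
  proof -
    obtain S T col where "S \<subseteq> {..<N}" "T \<subseteq> {..<N}" "card S = max (card V1) (card V2)"
      "card T = max (card V1) (card V2)" "\<forall>i\<in>S. \<forall>j\<in>T. c i j = col"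
      using spec[OF N, of c] by auto
    then have "has_mono_copy N c col V1 E1" "has_mono_copy N c col V2 E2"
      using has_mono_copy_of_biclique[OF assms(1), of S N T c col]
        has_mono_copy_of_biclique[OF assms(2), of S N T c col] by simp_all
    then show ?thesis
      by (cases col) auto
  qed
  then show ?thesis
    by auto
qed

lemma has_mono_copy_mono:
  assumes "M \<le> N" "has_mono_copy M c col V E"
  shows "has_mono_copy N c col V E"
proof -
  have "KNN_verts M \<subseteq> KNN_verts N"
    using assms(1) by (auto simp: KNN_verts_def)
  moreover obtain f where "inj_on f V" "f ` V \<subseteq> KNN_verts M"
    "\<forall>u v. {u, v} \<in> E \<longrightarrow> fst (f u) \<noteq> fst (f v) \<and> edge_colour c (f u) (f v) = col"
    using assms(2) by (auto simp: has_mono_copy_def)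
  ultimately show ?thesis
    unfolding has_mono_copy_def by blast
qed

lemma bip_ramsey_gt:
  assumes "\<exists>M. \<forall>c. has_mono_copy M c True V1 E1 \<or> has_mono_copy M c False V2 E2"
    and "\<not> has_mono_copy N c True V1 E1" "\<not> has_mono_copy N c False V2 E2"
  shows "N < bip_ramsey V1 E1 V2 E2"
proof (rule ccontr)
  assume "\<not> ?thesis"
  then have "bip_ramsey V1 E1 V2 E2 \<le> N"
    by simp
  moreover have "has_mono_copy (bip_ramsey V1 E1 V2 E2) c True V1 E1 \<or>
      has_mono_copy (bip_ramsey V1 E1 V2 E2) c False V2 E2"
    unfolding bip_ramsey_def by (rule LeastI_ex[OF assms(1), THEN spec])
  ultimately show False
    using assms(2,3) has_mono_copy_mono by metis
qed

section \<open>A colouring without red copies and blue bicliques\<close>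

definition bicliques :: "nat \<Rightarrow> nat \<Rightarrow> (nat \<times> nat) set set" where
  "bicliques N n = {S \<times> T | S T. S \<subseteq> {..<N} \<and> T \<subseteq> {..<N} \<and> card S = n \<and> card T = n}"

lemma card_bicliques_le: "card (bicliques N n) \<le> (N choose n) * (N choose n)"
proof -
  define SS where "SS = {S. S \<subseteq> {..<N} \<and> card S = n}"
  have "bicliques N n = (\<lambda>(S, T). S \<times> T) ` (SS \<times> SS)"
    by (auto simp: bicliques_def SS_def)
  moreover have "finite SS"
    by (rule finite_subset[of _ "Pow {..<N}"]) (auto simp: SS_def)
  ultimately have "card (bicliques N n) \<le> card (SS \<times> SS)"
    by (metis card_image_le finite_cartesian_product)
  moreover have "card SS = N choose n"
    using n_subsets[of "{..<N}" n] by (simp add: SS_def)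
  ultimately show ?thesis
    by (simp add: card_cartesian_product)
qed

lemma card_copies_meeting_biclique_le:
  assumes V: "finite V" "\<forall>e\<in>E. e \<subseteq> V" and B: "B \<in> bicliques N n"
  shows "card {D\<in>knn_copies N V E. D \<inter> B \<noteq> {}} \<le> n * n * (card V ^ 2 * (2 * N) ^ (card V - 2))"
proof -
  have fin: "finite B" "card B = n * n"
    using B by (auto simp: bicliques_def card_cartesian_product dest: finite_subset)
  have "knn_copies N V E \<subseteq> Pow ({..<N} \<times> {..<N})"
    using knn_copy_subset[OF V(2)] by blast
  then have "finite (knn_copies N V E)"
    by (rule finite_subset) simp
  then have "finite (\<Union>ij\<in>B. {D\<in>knn_copies N V E. ij \<in> D})"
    by (rule finite_subset[rotated]) auto
  moreover have "{D\<in>knn_copies N V E. D \<inter> B \<noteq> {}} \<subseteq> (\<Union>ij\<in>B. {D\<in>knn_copies N V E. ij \<in> D})"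
    by blast
  ultimately have "card {D\<in>knn_copies N V E. D \<inter> B \<noteq> {}} \<le> card (\<Union>ij\<in>B. {D\<in>knn_copies N V E. ij \<in> D})"
    by (rule card_mono)
  also have "\<dots> \<le> (\<Sum>ij\<in>B. card {D\<in>knn_copies N V E. ij \<in> D})"
    using fin by (intro card_UN_le)
  also have "\<dots> \<le> (\<Sum>ij\<in>B. card V ^ 2 * (2 * N) ^ (card V - 2))"
    using card_knn_copies_containing_le[OF V] by (intro sum_mono) (metis prod.collapse)
  finally show ?thesis
    using fin by simp
qed

lemma sum_bicliques_weight_le:
  fixes r t :: real and N n :: nat
  assumes V: "finite V" "\<forall>e\<in>E. e \<subseteq> V" and r: "0 \<le> r" "r \<le> 1" and t: "0 \<le> t"
  defines "K \<equiv> card V ^ 2 * (2 * N) ^ (card V - 2)"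
  shows "(\<Sum>B\<in>bicliques N n. (1 - r) ^ card B * (1 + t) ^ card {D\<in>knn_copies N V E. D \<inter> B \<noteq> {}})
    \<le> real ((N choose n) * (N choose n)) * ((1 - r) ^ (n * n) * (1 + t) ^ (n * n * K))"
proof -
  have "(1 - r) ^ card B * (1 + t) ^ card {D\<in>knn_copies N V E. D \<inter> B \<noteq> {}}
      \<le> (1 - r) ^ (n * n) * (1 + t) ^ (n * n * K)" if B: "B \<in> bicliques N n" for B
  proof -
    have "card B = n * n"
      using B by (auto simp: bicliques_def card_cartesian_product)
    moreover have "(1 + t) ^ card {D\<in>knn_copies N V E. D \<inter> B \<noteq> {}} \<le> (1 + t) ^ (n * n * K)"
      using card_copies_meeting_biclique_le[OF V B] t by (intro power_increasing) (auto simp: K_def)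
    ultimately show ?thesis
      using r by (simp add: mult_left_mono)
  qed
  then have "(\<Sum>B\<in>bicliques N n. (1 - r) ^ card B * (1 + t) ^ card {D\<in>knn_copies N V E. D \<inter> B \<noteq> {}})
      \<le> real (card (bicliques N n)) * ((1 - r) ^ (n * n) * (1 + t) ^ (n * n * K))"
    by (rule sum_bounded_above)
  also have "\<dots> \<le> real ((N choose n) * (N choose n)) * ((1 - r) ^ (n * n) * (1 + t) ^ (n * n * K))"
    using of_nat_mono[OF card_bicliques_le[of N n]] r t by (intro mult_right_mono) auto
  finally show ?thesis .
qed

lemma no_mono_copy_of_avoiding_hitting:
  assumes "\<forall>D\<in>knn_copies N V E. \<not> D \<subseteq> R" "\<forall>B\<in>bicliques N n. B \<inter> R \<noteq> {}"
  defines "c \<equiv> \<lambda>i j. (i, j) \<in> R"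
  shows "\<not> has_mono_copy N c True V E \<and> \<not> has_mono_copy N c False (Kbip_V n) (Kbip_E n)"
proof (intro conjI notI)
  assume "has_mono_copy N c True V E"
  then obtain D where D: "D \<in> knn_copies N V E" "\<forall>(i, j)\<in>D. c i j = True"
    by (auto dest: has_mono_copy_imp_knn_copy)
  then have "D \<subseteq> R"
    by (auto simp: c_def)
  then show False
    using assms(1) D(1) by auto
next
  assume "has_mono_copy N c False (Kbip_V n) (Kbip_E n)"
  then obtain S T where ST: "S \<subseteq> {..<N}" "T \<subseteq> {..<N}" "card S = n" "card T = n"
    "\<forall>i\<in>S. \<forall>j\<in>T. c i j = False"
    by (auto dest: Kbip_copy_imp_biclique)
  then have "S \<times> T \<in> bicliques N n"
    by (auto simp: bicliques_def)
  moreover have "S \<times> T \<inter> R = {}"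
    using ST(5) by (auto simp: c_def)
  ultimately show False
    using assms(2) by auto
qed

lemma exists_colouring_without_red_copy_or_blue_Kbip:
  fixes V :: "'a set" and E :: "'a set set" and r :: real
  assumes G: "simple_graph V E" "E \<noteq> {}" and r: "0 \<le> r" "r \<le> 1/2"
    and small: "real ((N choose n) * (N choose n)) *
      ((1 - r) ^ (n * n) * (1 + (r / (1 - r)) ^ card E) ^ (n * n * (card V ^ 2 * (2 * N) ^ (card V - 2)))) < 1"
  shows "\<exists>c. \<not> has_mono_copy N c True V E \<and> \<not> has_mono_copy N c False (Kbip_V n) (Kbip_E n)"
proof -
  have V: "finite V" "\<forall>e\<in>E. e \<subseteq> V"
    using G by (auto simp: simple_graph_def)
  then have "finite E"
    by (intro finite_subset[of E "Pow V"]) auto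
  then have E: "1 \<le> card E"
    using G(2) by (simp add: Suc_le_eq card_gt_0_iff)
  have U: "finite ({..<N} \<times> {..<N})" "knn_copies N V E \<subseteq> Pow ({..<N} \<times> {..<N})"
    "bicliques N n \<subseteq> Pow ({..<N} \<times> {..<N})"
    using knn_copy_subset[OF V(2)] by (auto simp: bicliques_def)
  have "\<forall>D\<in>knn_copies N V E. card E \<le> card D"
    using card_knn_copy[OF G(1)] by blast
  moreover have "(\<Sum>B\<in>bicliques N n. (1 - r) ^ card B * (1 + (r / (1 - r)) ^ card E) ^
      card {D\<in>knn_copies N V E. D \<inter> B \<noteq> {}}) < 1"
    using sum_bicliques_weight_le[OF V, of r "(r / (1 - r)) ^ card E" N n] r small by simp
  ultimately obtain R where "\<forall>D\<in>knn_copies N V E. \<not> D \<subseteq> R" "\<forall>B\<in>bicliques N n. B \<inter> R \<noteq> {}"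
    using exists_subset_avoiding_and_hitting[OF U E _ r] by auto
  then show ?thesis
    by (auto dest: no_mono_copy_of_avoiding_hitting)
qed

lemma bip_ramsey_Kbip_gt:
  fixes V :: "'a set" and E :: "'a set set" and r :: real
  assumes G: "bipartite_graph V E" "E \<noteq> {}" and r: "0 \<le> r" "r \<le> 1/2"
    and small: "real ((N choose n) * (N choose n)) *
      ((1 - r) ^ (n * n) * (1 + (r / (1 - r)) ^ card E) ^ (n * n * (card V ^ 2 * (2 * N) ^ (card V - 2)))) < 1"
  shows "N < bip_ramsey V E (Kbip_V n) (Kbip_E n)"
proof -
  obtain c where "\<not> has_mono_copy N c True V E" "\<not> has_mono_copy N c False (Kbip_V n) (Kbip_E n)"
    using exists_colouring_without_red_copy_or_blue_Kbip[OF _ G(2) r small] G(1)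
    by (auto simp: bipartite_graph_def)
  then show ?thesis
    by (rule bip_ramsey_gt[OF bip_ramsey_exists[OF G(1) bipartite_Kbip]])
qed

section \<open>Choice of the parameters\<close>

lemma power_one_minus_times_power_one_plus_le_exp:
  fixes r t :: real
  assumes "0 \<le> r" "r \<le> 1" "0 \<le> t"
  shows "(1 - r) ^ M * (1 + t) ^ L \<le> exp (t * L - r * M)"
proof -
  have "(1 - r) ^ M * (1 + t) ^ L \<le> exp (- r) ^ M * exp t ^ L"
    using assms exp_ge_add_one_self[of "- r"] exp_ge_add_one_self[of t]
    by (intro mult_mono power_mono) (auto simp: add.commute)
  also have "\<dots> = exp (t * L - r * M)"
    by (simp add: exp_of_nat_mult[symmetric] exp_diff exp_minus field_simps)
  finally show ?thesis .
qed

text \<open>The choice of \<open>r\<close> makes the factor exp (- r n^2 / 2) beat (N choose n)^2 \<le> n^(2 a n).\<close>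

lemma deletion_inequality:
  fixes n N K q :: nat and a r :: real
  assumes n: "2 \<le> n" and a: "0 \<le> a" and r: "0 \<le> r" "r \<le> 1/2"
    and N: "real N \<le> real n powr a"
    and K: "(r / (1 - r)) ^ q * K \<le> r / 2"
    and rn: "r * n = (4 * a + 4) * ln n"
  shows "real ((N choose n) * (N choose n)) * ((1 - r) ^ (n * n) * (1 + (r / (1 - r)) ^ q) ^ (n * n * K)) < 1"
proof -
  define t where "t = (r / (1 - r)) ^ q"
  have t: "0 \<le> t"
    using r by (simp add: t_def)
  have ln_n: "0 < ln (real n)"
    using n by simp
  have "real ((N choose n) * (N choose n)) \<le> real N ^ (2 * n)"
  proof -
    have "N choose n \<le> N ^ n"
      by (cases "n \<le> N") (auto simp: binomial_le_pow binomial_eq_0)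
    then show ?thesis
      by (metis of_nat_le_iff of_nat_power mult_le_mono power_add mult_2)
  qed
  also have "\<dots> \<le> (real n powr a) ^ (2 * n)"
    using N by (intro power_mono) auto
  also have "\<dots> = exp (2 * a * n * ln n)"
    using n by (simp add: powr_def exp_of_nat_mult[symmetric] mult_ac)
  finally have binom: "real ((N choose n) * (N choose n)) \<le> exp (2 * a * n * ln n)" .
  have "(1 - r) ^ (n * n) * (1 + t) ^ (n * n * K) \<le> exp (t * real (n * n * K) - r * real (n * n))"
    using r t by (intro power_one_minus_times_power_one_plus_le_exp) auto
  also have "\<dots> \<le> exp (- (r * n) * n / 2)"
    using K mult_right_mono[OF K, of "real (n * n)"] by (simp add: t_def algebra_simps)
  also have "\<dots> = exp (- (2 * a + 2) * n * ln n)"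
    unfolding rn by (simp add: field_simps)
  finally have "real ((N choose n) * (N choose n)) * ((1 - r) ^ (n * n) * (1 + t) ^ (n * n * K))
      \<le> exp (2 * a * n * ln n) * exp (- (2 * a + 2) * n * ln n)"
    using binom by (intro mult_mono) (use r t in auto)
  also have "\<dots> = exp (- (2 * n * ln n))"
    by (simp add: exp_add[symmetric] algebra_simps)
  also have "\<dots> < 1"
    using n ln_n by simp
  finally show ?thesis
    by (simp add: t_def)
qed

lemma copy_density_bound:
  fixes p q N K :: nat and \<kappa> b x C :: real
  assumes pq: "3 \<le> p" "2 \<le> q" and pos: "0 < \<kappa>" "0 < b" "0 < x" and small: "b / x \<le> 1/2"
    and C: "C = (2 ^ (q + 1) * \<kappa> * b ^ (q - 1)) powr (- 1 / (real p - 2))"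
    and N: "real N \<le> C * x powr ((real q - 1) / (real p - 2))"
    and K: "real K \<le> \<kappa> * real N ^ (p - 2)"
  shows "((b / x) / (1 - b / x)) ^ q * K \<le> (b / x) / 2"
proof -
  define r where "r = b / x"
  define d where "d = 2 ^ (q + 1) * \<kappa> * b ^ (q - 1)"
  have r: "0 < r" "r \<le> 1/2" and d_pos: "0 < d" and p2: "real (p - 2) = real p - 2"
    using pos pq small by (auto simp: r_def d_def)
  have "C = d powr (- 1 / (real p - 2))"
    by (simp only: C d_def)
  then have "C ^ (p - 2) = d powr (- 1 / (real p - 2) * real (p - 2))"
    using d_pos by (simp add: powr_realpow[symmetric] powr_powr)
  also have "\<dots> = 1 / d"
    using pq d_pos by (simp add: p2 powr_minus_divide)
  finally have C_pow: "C ^ (p - 2) = 1 / d" .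
  have "(x powr ((real q - 1) / (real p - 2))) ^ (p - 2) = x powr (real q - 1)"
    using pos pq by (simp add: powr_realpow[symmetric] powr_powr p2)
  also have "\<dots> = x ^ (q - 1)"
    using pos pq by (simp add: powr_realpow[symmetric])
  finally have "(C * x powr ((real q - 1) / (real p - 2))) ^ (p - 2) = x ^ (q - 1) / d"
    by (simp add: power_mult_distrib C_pow)
  then have N_pow: "real N ^ (p - 2) \<le> x ^ (q - 1) / d"
    using N by (metis of_nat_0_le_iff power_mono)
  have "(r / (1 - r)) ^ q \<le> (2 * r) ^ q"
    using r by (intro power_mono) (auto simp: field_simps)
  moreover have "real K \<le> \<kappa> * (x ^ (q - 1) / d)"
    using K N_pow pos by (meson mult_left_mono less_imp_le order_trans)
  ultimately have "(r / (1 - r)) ^ q * K \<le> (2 * r) ^ q * (\<kappa> * (x ^ (q - 1) / d))"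
    using r by (intro mult_mono) auto
  also have "\<dots> = 2 ^ q * r * (r * x) ^ (q - 1) * \<kappa> / d"
    using pq by (cases q) (simp_all add: power_mult_distrib)
  also have "\<dots> = r / 2"
    using pos pq by (cases q) (simp_all add: r_def d_def)
  finally show ?thesis
    by (simp add: r_def)
qed

lemma one_le_ln_nat: "3 \<le> n \<Longrightarrow> 1 \<le> ln (real n)"
  using exp_le ln_le_cancel_iff[of "exp 1" "real n"] by simp

lemma deletion_inequality_for_parameters:
  fixes p q n N K :: nat and \<kappa> :: real
  defines "a \<equiv> (real q - 1) / (real p - 2)"
  defines "b \<equiv> 4 * a + 4"
  defines "r \<equiv> b * ln n / n"
  assumes pq: "3 \<le> p" "2 \<le> q" and \<kappa>: "1 \<le> \<kappa>" and n: "3 \<le> n" and r_half: "r \<le> 1/2"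
    and N: "real N \<le> (2 ^ (q + 1) * \<kappa> * b ^ (q - 1)) powr (- 1 / (real p - 2)) * (n / ln n) powr a"
    and K: "real K \<le> \<kappa> * real N ^ (p - 2)"
  shows "0 \<le> r \<and> real ((N choose n) * (N choose n)) * ((1 - r) ^ (n * n) * (1 + (r / (1 - r)) ^ q) ^ (n * n * K)) < 1"
proof -
  define x where "x = n / ln n"
  have ln_n: "1 \<le> ln n"
    using n by (rule one_le_ln_nat)
  have x: "0 < x" "x \<le> n" and r_x: "r = b / x"
    using ln_n n by (auto simp: x_def r_def field_simps)
  have a: "0 < a"
    using pq by (simp add: a_def)
  then have b: "0 < b"
    by (simp add: b_def)
  have t_K: "(r / (1 - r)) ^ q * K \<le> r / 2"
    unfolding r_x using pq \<kappa> b x r_half[unfolded r_x] N[folded x_def] K unfolding a_def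
    by (intro copy_density_bound[where C = "(2 ^ (q + 1) * \<kappa> * b ^ (q - 1)) powr (- 1 / (real p - 2))"]) auto
  have N_le: "real N \<le> n powr a"
  proof -
    have "1 * 1 * 1 \<le> 2 ^ (q + 1) * \<kappa> * b ^ (q - 1)"
      using \<kappa> a one_le_power[of "2 :: real" "q + 1"] by (intro mult_mono) (auto simp: b_def)
    then have "(2 ^ (q + 1) * \<kappa> * b ^ (q - 1)) powr (- 1 / (real p - 2)) \<le> 1"
      using pq \<kappa> b powr_mono[of "- 1 / (real p - 2)" 0 "2 ^ (q + 1) * \<kappa> * b ^ (q - 1)"] by simp
    then have "(2 ^ (q + 1) * \<kappa> * b ^ (q - 1)) powr (- 1 / (real p - 2)) * x powr a \<le> 1 * x powr a"
      by (rule mult_right_mono) simp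
    then have "real N \<le> x powr a"
      using N[folded x_def] by simp
    also have "\<dots> \<le> n powr a"
      using x a by (intro powr_mono2) auto
    finally show ?thesis .
  qed
  have r_n: "r * n = (4 * a + 4) * ln n"
    using n by (simp add: r_def b_def)
  have "0 \<le> r"
    using b x by (simp add: r_x)
  with deletion_inequality[of n a r N q K] show ?thesis
    using n a r_half N_le t_K r_n by simp
qed

lemma not_has_mono_copy_0: "V \<noteq> {} \<Longrightarrow> \<not> has_mono_copy 0 c col V E"
  by (auto simp: has_mono_copy_def KNN_verts_def)

lemma bip_ramsey_Kbip_pos:
  assumes "bipartite_graph V E" "V \<noteq> {}" "1 \<le> n"
  shows "0 < bip_ramsey V E (Kbip_V n) (Kbip_E n)"
proof -
  have "(True, 0) \<in> Kbip_V n"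
    using assms(3) by (simp add: Kbip_V_def)
  then have "Kbip_V n \<noteq> {}"
    by auto
  then show ?thesis
    using bip_ramsey_gt[OF bip_ramsey_exists[OF assms(1) bipartite_Kbip]] not_has_mono_copy_0 assms(2)
    by metis
qed

lemma bip_ramsey_Kbip_lower_bound:
  fixes V :: "'a set" and E :: "'a set set"
  assumes G: "bipartite_graph V E" and p: "3 \<le> card V" and q: "2 \<le> card E"
  defines "a \<equiv> (real (card E) - 1) / (real (card V) - 2)"
  shows "\<exists>C>0. \<forall>\<^sub>F n in sequentially. C * (real n / ln n) powr a < real (bip_ramsey V E (Kbip_V n) (Kbip_E n))"
proof -
  \<comment> \<open>\<open>\<kappa> * N ^ (p - 2)\<close> bounds the number of copies of G through an edge of K_{N,N}.\<close>
  define \<kappa> where "\<kappa> = real (card V ^ 2 * 2 ^ (card V - 2))"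
  define b where "b = 4 * a + 4"
  define C where "C = (2 ^ (card E + 1) * \<kappa> * b ^ (card E - 1)) powr (- 1 / (real (card V) - 2))"
  have "1 \<le> card V ^ 2 * 2 ^ (card V - 2)"
    using p by (simp add: Suc_le_eq)
  then have \<kappa>: "1 \<le> \<kappa>"
    unfolding \<kappa>_def by (metis of_nat_1 of_nat_le_iff)
  have "0 < a"
    using p q by (simp add: a_def)
  then have b: "0 < b"
    by (simp add: b_def)
  have "E \<noteq> {}"
    using q by auto
  have bound: "C * (real n / ln n) powr a < real (bip_ramsey V E (Kbip_V n) (Kbip_E n))"
    if n: "3 \<le> n" "b * ln n / n \<le> 1/2" for n
  proof -
    define N where "N = nat \<lfloor>C * (real n / ln n) powr a\<rfloor>"
    define r where "r = b * ln n / n"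
    have "0 \<le> C * (real n / ln n) powr a"
      by (simp add: C_def)
    then have N: "real N \<le> C * (real n / ln n) powr a" "C * (real n / ln n) powr a < real N + 1"
      unfolding N_def by linarith+
    have K: "real (card V ^ 2 * (2 * N) ^ (card V - 2)) \<le> \<kappa> * real N ^ (card V - 2)"
      by (simp add: \<kappa>_def power_mult_distrib)
    have "0 \<le> r \<and> real ((N choose n) * (N choose n)) * ((1 - r) ^ (n * n) *
        (1 + (r / (1 - r)) ^ card E) ^ (n * n * (card V ^ 2 * (2 * N) ^ (card V - 2)))) < 1"
      using deletion_inequality_for_parameters[OF p q \<kappa> n(1) n(2)[unfolded b_def a_def]
          N(1)[unfolded C_def b_def a_def] K]
      by (simp only: r_def b_def a_def)
    then have "N < bip_ramsey V E (Kbip_V n) (Kbip_E n)"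
      using bip_ramsey_Kbip_gt[OF G \<open>E \<noteq> {}\<close>, of r N n] n(2) by (simp add: r_def)
    with N(2) show ?thesis
      by linarith
  qed
  have "\<forall>\<^sub>F n in sequentially. b * ln n / n \<le> 1/2"
    using b by real_asymp
  then have "\<forall>\<^sub>F n in sequentially. C * (real n / ln n) powr a < real (bip_ramsey V E (Kbip_V n) (Kbip_E n))"
    using eventually_ge_at_top[of 3] by eventually_elim (rule bound)
  moreover have "0 < C"
    using \<kappa> b by (simp add: C_def)
  ultimately show ?thesis
    by auto
qed

lemma bip_ramsey_Kbip_lower_bound_le_one_edge:
  fixes V :: "'a set" and E :: "'a set set"
  assumes G: "bipartite_graph V E" and p: "3 \<le> card V" and q: "card E \<le> 1"
  defines "a \<equiv> (real (card E) - 1) / (real (card V) - 2)"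
  shows "\<exists>C>0. \<forall>\<^sub>F n in sequentially. C * (real n / ln n) powr a < real (bip_ramsey V E (Kbip_V n) (Kbip_E n))"
proof -
  have "x powr a \<le> 1" if "1 \<le> x" for x :: real
    using p q that powr_mono[of a 0 x] by (simp add: a_def divide_nonpos_pos)
  moreover have "V \<noteq> {}"
    using p by auto
  ultimately have bound: "1/2 * (real n / ln n) powr a < real (bip_ramsey V E (Kbip_V n) (Kbip_E n))"
    if "1 \<le> n" "1 \<le> real n / ln n" for n
    using bip_ramsey_Kbip_pos[OF G _ that(1)] that(2) by fastforce
  have "\<forall>\<^sub>F n in sequentially. 1 \<le> real n / ln n"
    by real_asymp
  then have "\<forall>\<^sub>F n in sequentially. 1/2 * (real n / ln n) powr a < real (bip_ramsey V E (Kbip_V n) (Kbip_E n))"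
    using eventually_ge_at_top[of 1] by eventually_elim (rule bound)
  then show ?thesis
    by (intro exI[of _ "1/2"]) simp
qed

theorem theorem1:
  fixes V :: "'a set" and E :: "'a set set"
  assumes "bipartite_graph V E" and "card V \<ge> 3"
  shows "\<exists>C > 0. \<exists>n0::nat. \<forall>n \<ge> n0.
           real (bip_ramsey V E (Kbip_V n) (Kbip_E n))
             > C * (real n / ln (real n)) powr ((real (card E) - 1) / (real (card V) - 2))"
proof -
  have "\<exists>C>0. \<forall>\<^sub>F n in sequentially.
      C * (real n / ln n) powr ((real (card E) - 1) / (real (card V) - 2)) < real (bip_ramsey V E (Kbip_V n) (Kbip_E n))"
  proof (cases "card E \<le> 1")
    case True
    then show ?thesis
      using bip_ramsey_Kbip_lower_bound_le_one_edge[OF assms] by simp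
  next
    case False
    then show ?thesis
      using bip_ramsey_Kbip_lower_bound[OF assms] by simp
  qed
  then show ?thesis
    by (auto simp: eventually_sequentially)
qed

end
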